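(* Let $X\xrightarrow{f}Y\xrightarrow{g}Z$ be continuous maps between topological spaces, with $f$ surjective. If $f$ and $g\circ f$ are Serre fibrations, then $g$ is a Serre fibration.
   Context: A map $p\colon E\to B$ is a Serre fibration if for every $n\geq1$ and every commutative square with top map $[0,1]^{n-1}\times\{0\}\to E$, bottom map $[0,1]^n\to B$ and left map the inclusion, there is a map $[0,1]^n\to E$ making both triangles commute. *)

theory Defs
  imports "HOL-Analysis.Analysis"
begin

definition cube :: "nat \<Rightarrow> (nat \<Rightarrow> real) topology" where
  "cube n = product_topology (\<lambda>i. top_of_set {0..1::real}) {..<n}"

definition cube_base :: "nat \<Rightarrow> (nat \<Rightarrow> real) topology" where
  "cube_base n = subtopology (cube n) {x \<in> topspace (cube n). x (n - 1) = 0}"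

definition serre_fibration :: "'e topology \<Rightarrow> 'b topology \<Rightarrow> ('e \<Rightarrow> 'b) \<Rightarrow> bool" where
  "serre_fibration E B p \<longleftrightarrow> continuous_map E B p \<and>
     (\<forall>n\<ge>1. \<forall>h H. continuous_map (cube_base n) E h \<and> continuous_map (cube n) B H \<and>
        (\<forall>x\<in>topspace (cube_base n). p (h x) = H x) \<longrightarrow>
        (\<exists>L. continuous_map (cube n) E L \<and>
             (\<forall>x\<in>topspace (cube_base n). L x = h x) \<and>
             (\<forall>x\<in>topspace (cube n). p (L x) = H x)))"

end

theory Submission
  imports Defs
begin

text \<open>
  The face \<open>[0,1]\<^sup>n\<^sup>-\<^sup>1 \<times> {0}\<close> is contractible, so a map from it into \<open>Y\<close> is the end of a
  homotopy starting at a constant map. Lifting the constant map through the surjection \<open>f\<close>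
  and then the homotopy through the Serre fibration \<open>f\<close> (one dimension up) lifts every such
  map to \<open>X\<close>. Given a lifting problem for \<open>g\<close>, lift its top map to \<open>X\<close> in this way, solve the
  resulting lifting problem for \<open>g \<circ> f\<close>, and push the solution down along \<open>f\<close>.
\<close>

lemma topspace_cube: "topspace (cube n) = (\<Pi>\<^sub>E i\<in>{..<n}. {0..1::real})"
  by (simp add: cube_def topspace_product_topology)

lemma topspace_cube_base:
  "topspace (cube_base n) = {x \<in> topspace (cube n). x (n - 1) = 0}"
  by (auto simp: cube_base_def)

lemma extensional_cube_base: "y \<in> topspace (cube_base n) \<Longrightarrow> y \<in> extensional {..<n}"
  by (simp add: topspace_cube_base topspace_cube PiE_def)

lemma continuous_map_cube_component:
  assumes "k < n"
  shows "continuous_map (cube n) euclideanreal (\<lambda>x. x k)"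
proof -
  have "continuous_map (cube n) (top_of_set {0..1}) (\<lambda>x. x k)"
    unfolding cube_def using assms by (intro continuous_map_product_projection) auto
  then show ?thesis
    by (simp add: continuous_map_in_subtopology)
qed

lemma serre_fibrationE:
  assumes "serre_fibration E B p" and "n \<ge> 1"
    and "continuous_map (cube_base n) E h" and "continuous_map (cube n) B H"
    and "\<And>x. x \<in> topspace (cube_base n) \<Longrightarrow> p (h x) = H x"
  obtains L where "continuous_map (cube n) E L"
    and "\<And>x. x \<in> topspace (cube_base n) \<Longrightarrow> L x = h x"
    and "\<And>x. x \<in> topspace (cube n) \<Longrightarrow> p (L x) = H x"
  using assms unfolding serre_fibration_def by metis

text \<open>The straight-line contraction of the face onto the origin; coordinate \<open>n\<close> of
  \<open>[0,1]\<^sup>n\<^sup>+\<^sup>1\<close> is the time parameter.\<close>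

definition cube_base_contraction :: "nat \<Rightarrow> (nat \<Rightarrow> real) \<Rightarrow> nat \<Rightarrow> real" where
  "cube_base_contraction n x = restrict (\<lambda>i. if i = n - 1 then 0 else x n * x i) {..<n}"

lemma continuous_map_cube_base_contraction:
  assumes "n \<ge> 1"
  shows "continuous_map (cube (Suc n)) (cube_base n) (cube_base_contraction n)"
proof -
  have into_cube: "continuous_map (cube (Suc n)) (cube n) (cube_base_contraction n)"
    unfolding cube_def[of n]
  proof (subst continuous_map_componentwise, intro conjI ballI)
    show "cube_base_contraction n ` topspace (cube (Suc n)) \<subseteq> extensional {..<n}"
      by (auto simp: cube_base_contraction_def)
    fix k assume k: "k \<in> {..<n}"
    show "continuous_map (cube (Suc n)) (top_of_set {0..1}) (\<lambda>x. cube_base_contraction n x k)"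
    proof (cases "k = n - 1")
      case False
      have "continuous_map (cube (Suc n)) euclideanreal (\<lambda>x. x n * x k)"
        using k by (intro continuous_map_real_mult continuous_map_cube_component) auto
      moreover have "x n * x k \<in> {0..1}" if "x \<in> topspace (cube (Suc n))" for x
        using that k by (auto simp: topspace_cube PiE_iff intro: mult_le_one)
      ultimately show ?thesis
        using k False by (simp add: cube_base_contraction_def continuous_map_in_subtopology image_subset_iff)
    qed (use k in \<open>simp add: cube_base_contraction_def\<close>)
  qed
  have "cube_base_contraction n x (n - 1) = 0" for x
    using assms by (simp add: cube_base_contraction_def)
  then show ?thesis
    unfolding cube_base_def using continuous_map_funspace[OF into_cube]
    by (intro continuous_map_into_subtopology into_cube) auto
qed

lemma cube_base_contraction_start:
  assumes "x \<in> topspace (cube_base (Suc n))"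
  shows "cube_base_contraction n x = restrict (\<lambda>_. 0) {..<n}"
proof -
  have "x n = 0"
    using assms by (simp add: topspace_cube_base)
  then show ?thesis
    unfolding cube_base_contraction_def by (intro restrict_ext) simp
qed

lemma cube_base_contraction_end:
  assumes "n \<ge> 1" and "y \<in> topspace (cube_base n)"
  shows "cube_base_contraction n (y(n := 1)) = y"
proof
  have y_last: "y (n - 1) = 0"
    using assms(2) by (simp add: topspace_cube_base)
  have y_ext: "y \<in> extensional {..<n}"
    using assms(2) by (rule extensional_cube_base)
  fix i
  show "cube_base_contraction n (y(n := 1)) i = y i"
  proof (cases "i < n")
    case False
    then show ?thesis
      using extensional_arb[OF y_ext] by (simp add: cube_base_contraction_def)
  qed (use y_last in \<open>simp add: cube_base_contraction_def\<close>)
qed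

lemma continuous_map_cube_base_end:
  "continuous_map (cube_base n) (cube (Suc n)) (\<lambda>y. y(n := 1))"
  unfolding cube_def[of "Suc n"]
proof (subst continuous_map_componentwise, intro conjI ballI)
  show "(\<lambda>y. y(n := 1)) ` topspace (cube_base n) \<subseteq> extensional {..<Suc n}"
    using extensional_cube_base by (force simp: extensional_def)
  fix k assume k: "k \<in> {..<Suc n}"
  show "continuous_map (cube_base n) (top_of_set {0..1}) (\<lambda>y. (y(n := 1)) k)"
  proof (cases "k = n")
    case False
    then have "continuous_map (cube n) (top_of_set {0..1}) (\<lambda>y. y k)"
      using k unfolding cube_def by (intro continuous_map_product_projection) auto
    then show ?thesis
      using False unfolding cube_base_def by (simp add: continuous_map_from_subtopology)
  qed simp
qed

lemma surjective_serre_fibration_lifts_cube_base: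
  assumes surj: "p ` topspace E = topspace B" and fib: "serre_fibration E B p"
    and h: "continuous_map (cube_base n) B h" and n: "n \<ge> 1"
  obtains h' where "continuous_map (cube_base n) E h'"
    and "\<And>y. y \<in> topspace (cube_base n) \<Longrightarrow> p (h' y) = h y"
proof -
  let ?c = "cube_base_contraction n"
  define origin where "origin = restrict (\<lambda>_. 0::real) {..<n}"
  have "origin \<in> topspace (cube_base n)"
    using n by (auto simp: origin_def topspace_cube_base topspace_cube)
  with continuous_map_funspace[OF h] have "h origin \<in> topspace B"
    by (rule funcset_mem)
  then have "h origin \<in> p ` topspace E"
    by (simp add: surj)
  then obtain a where a: "h origin = p a" "a \<in> topspace E"
    by (rule imageE)
  have homotopy: "continuous_map (cube (Suc n)) B (h \<circ> ?c)"
    using continuous_map_cube_base_contraction[OF n] h by (rule continuous_map_compose)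
  have start: "p a = (h \<circ> ?c) x" if "x \<in> topspace (cube_base (Suc n))" for x
    using that by (simp add: a(1)[symmetric] cube_base_contraction_start origin_def)
  have const: "continuous_map (cube_base (Suc n)) E (\<lambda>_. a)"
    using a(2) by simp
  obtain L where L: "continuous_map (cube (Suc n)) E L"
    and L_lifts: "\<And>x. x \<in> topspace (cube (Suc n)) \<Longrightarrow> p (L x) = (h \<circ> ?c) x"
    by (rule serre_fibrationE[OF fib _ const homotopy start]) auto
  show thesis
  proof
    show "continuous_map (cube_base n) E (\<lambda>y. L (y(n := 1)))"
      using continuous_map_compose[OF continuous_map_cube_base_end L] by (simp add: o_def)
    fix y assume y: "y \<in> topspace (cube_base n)"
    have "y(n := 1) \<in> topspace (cube (Suc n))"
      using continuous_map_funspace[OF continuous_map_cube_base_end] y by (rule funcset_mem)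
    then show "p (L (y(n := 1))) = h y"
      using L_lifts cube_base_contraction_end[OF n y] by simp
  qed
qed

theorem propositionA1:
  fixes X :: "'a topology" and Y :: "'b topology" and Z :: "'c topology"
    and f :: "'a \<Rightarrow> 'b" and g :: "'b \<Rightarrow> 'c"
  assumes "continuous_map X Y f" and "continuous_map Y Z g"
    and "f ` topspace X = topspace Y"
    and "serre_fibration X Y f" and "serre_fibration X Z (g \<circ> f)"
  shows "serre_fibration Y Z g"
  unfolding serre_fibration_def
proof (intro conjI allI impI)
  show "continuous_map Y Z g" by fact
  fix n :: nat and h H
  assume n: "n \<ge> 1"
    and problem: "continuous_map (cube_base n) Y h \<and> continuous_map (cube n) Z H \<and>
        (\<forall>x\<in>topspace (cube_base n). g (h x) = H x)"
  obtain h' where h': "continuous_map (cube_base n) X h'"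
      and h'_lifts: "\<And>x. x \<in> topspace (cube_base n) \<Longrightarrow> f (h' x) = h x"
    using surjective_serre_fibration_lifts_cube_base[OF assms(3,4) _ n] problem by blast
  obtain L where "continuous_map (cube n) X L"
      and "\<And>x. x \<in> topspace (cube_base n) \<Longrightarrow> L x = h' x"
      and "\<And>x. x \<in> topspace (cube n) \<Longrightarrow> (g \<circ> f) (L x) = H x"
    using serre_fibrationE[OF assms(5) n h'] problem h'_lifts by auto
  then show "\<exists>L. continuous_map (cube n) Y L \<and>
             (\<forall>x\<in>topspace (cube_base n). L x = h x) \<and>
             (\<forall>x\<in>topspace (cube n). g (L x) = H x)"
    using h'_lifts continuous_map_compose[of _ X L Y f] assms(1)
    by (intro exI[of _ "f \<circ> L"]) auto
qed

end
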